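(* Let $m,n$ be positive integers and let $R$ be an $m\times n$ rectangular permutation matrix. Then $\frac{1}{2}(R+R^\pi)$ is an extreme point of $\Gamma^\pi_{m,n}$ if and only if one of the following holds: (i) $m$ is even and $R$ is a centrosymmetric rectangular permutation matrix; (ii) $m$ is odd and $\tilde R$ is an $(m-1)\times n$ centrosymmetric rectangular permutation matrix, where $\tilde R$ is the matrix obtained from $R$ by deleting its center row (the $\frac{m+1}{2}$-th row).
   Context: A real $m\times n$ matrix is stochastic if its entries are nonnegative and each row sums to $1$. For $A=(a_{i,j})\in M_{p,n}$, $A^\pi$ is the $p\times n$ matrix with $(A^\pi)_{i,j}=a_{p+1-i,n+1-j}$; $A$ is centrosymmetric if $A=A^\pi$. $\Gamma^\pi_{m,n}$ is the convex set of $m\times n$ centrosymmetric stochastic matrices. A rectangular permutation matrix is a $(0,1)$-matrix with exactly one $1$ in each row. *)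

theory Defs
  imports "HOL-Analysis.Analysis"
begin

text \<open>An m x n real matrix is represented as a function nat => nat => real, with
  rows indexed by 0..<m and columns by 0..<n (0-based); entries outside this range
  are required to be 0 so that each matrix has a unique representative.\<close>

definition is_mat :: "nat \<Rightarrow> nat \<Rightarrow> (nat \<Rightarrow> nat \<Rightarrow> real) \<Rightarrow> bool" where
  "is_mat m n A \<longleftrightarrow> (\<forall>i j. \<not> (i < m \<and> j < n) \<longrightarrow> A i j = 0)"

definition stochastic :: "nat \<Rightarrow> nat \<Rightarrow> (nat \<Rightarrow> nat \<Rightarrow> real) \<Rightarrow> bool" where
  "stochastic m n A \<longleftrightarrow> is_mat m n A \<and>
     (\<forall>i<m. \<forall>j<n. 0 \<le> A i j) \<and> (\<forall>i<m. (\<Sum>j<n. A i j) = 1)"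

text \<open>A^pi: (A^pi)_{i,j} = a_{p+1-i, n+1-j}, in 0-based indexing a_{p-1-i, n-1-j}.\<close>
definition pi_mat :: "nat \<Rightarrow> nat \<Rightarrow> (nat \<Rightarrow> nat \<Rightarrow> real) \<Rightarrow> (nat \<Rightarrow> nat \<Rightarrow> real)" where
  "pi_mat m n A = (\<lambda>i j. if i < m \<and> j < n then A (m - 1 - i) (n - 1 - j) else 0)"

definition centrosymmetric :: "nat \<Rightarrow> nat \<Rightarrow> (nat \<Rightarrow> nat \<Rightarrow> real) \<Rightarrow> bool" where
  "centrosymmetric m n A \<longleftrightarrow> is_mat m n A \<and> A = pi_mat m n A"

definition Gamma_pi :: "nat \<Rightarrow> nat \<Rightarrow> (nat \<Rightarrow> nat \<Rightarrow> real) set" where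
  "Gamma_pi m n = {A. stochastic m n A \<and> centrosymmetric m n A}"

definition rect_perm :: "nat \<Rightarrow> nat \<Rightarrow> (nat \<Rightarrow> nat \<Rightarrow> real) \<Rightarrow> bool" where
  "rect_perm m n R \<longleftrightarrow> is_mat m n R \<and>
     (\<forall>i<m. \<forall>j<n. R i j = 0 \<or> R i j = 1) \<and>
     (\<forall>i<m. \<exists>!j. j < n \<and> R i j = 1)"

definition extreme_mat :: "(nat \<Rightarrow> nat \<Rightarrow> real) \<Rightarrow> (nat \<Rightarrow> nat \<Rightarrow> real) set \<Rightarrow> bool" where
  "extreme_mat X S \<longleftrightarrow> X \<in> S \<and>
     (\<forall>A\<in>S. \<forall>B\<in>S. \<forall>t::real. 0 < t \<and> t < 1 \<and>
        X = (\<lambda>i j. t * A i j + (1 - t) * B i j) \<longrightarrow> A = B)"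

text \<open>Deleting the centre row (row (m+1)/2 in 1-based indexing, i.e. row m div 2 in
  0-based indexing, for odd m) yields an (m-1) x n matrix.\<close>
definition del_center_row :: "nat \<Rightarrow> nat \<Rightarrow> (nat \<Rightarrow> nat \<Rightarrow> real) \<Rightarrow> (nat \<Rightarrow> nat \<Rightarrow> real)" where
  "del_center_row m n R = (\<lambda>i j. if i < m - 1 \<and> j < n
       then (if i < m div 2 then R i j else R (i + 1) j) else 0)"

end

theory Submission
  imports Defs
begin

(* Write X = (R + R^pi)/2 and pair each row i with its mirror row m-1-i. Points of Gamma^pi are
   nonnegative, so both summands of a convex decomposition of X vanish wherever X does; hence X
   is extreme once it is the only point of Gamma^pi supported inside its own support. That is the
   case when R agrees with R^pi on every row other than a self-mirrored centre row: then every
   row of X is a 0-1 row, except the centre row, which is reflection-symmetric with at most two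
   nonzero entries. If instead R and R^pi differ on some row i with i <> m-1-i, taking rows i and
   m-1-i from R in one matrix and from R^pi in the other (and X elsewhere) exhibits X as the
   midpoint of two distinct points of Gamma^pi. For even m no row is its own mirror, and for odd
   m the remaining rows are exactly those of R with its centre row deleted. *)

definition centro_mean :: "nat \<Rightarrow> nat \<Rightarrow> (nat \<Rightarrow> nat \<Rightarrow> real) \<Rightarrow> nat \<Rightarrow> nat \<Rightarrow> real" where
  "centro_mean m n R = (\<lambda>i j. (1/2) * (R i j + pi_mat m n R i j))"

definition centrosymmetric_off_centre :: "nat \<Rightarrow> nat \<Rightarrow> (nat \<Rightarrow> nat \<Rightarrow> real) \<Rightarrow> bool" where
  "centrosymmetric_off_centre m n R \<longleftrightarrow>
     (\<forall>i<m. \<forall>j<n. i \<noteq> m - 1 - i \<longrightarrow> R i j = R (m - 1 - i) (n - 1 - j))"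

lemma pi_mat_apply [simp]: "i < m \<Longrightarrow> j < n \<Longrightarrow> pi_mat m n A i j = A (m - 1 - i) (n - 1 - j)"
  by (simp add: pi_mat_def)

lemma is_mat_pi_mat: "is_mat m n (pi_mat m n A)"
  by (simp add: is_mat_def pi_mat_def)

lemma centrosymmetric_iff:
  "is_mat m n A \<Longrightarrow> centrosymmetric m n A \<longleftrightarrow> (\<forall>i<m. \<forall>j<n. A i j = A (m - 1 - i) (n - 1 - j))"
  by (auto simp: centrosymmetric_def fun_eq_iff is_mat_def pi_mat_def)

lemma Gamma_pi_iff:
  "A \<in> Gamma_pi m n \<longleftrightarrow> stochastic m n A \<and> (\<forall>i<m. \<forall>j<n. A i j = A (m - 1 - i) (n - 1 - j))"
  unfolding Gamma_pi_def mem_Collect_eq by (metis centrosymmetric_iff stochastic_def)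

lemma stochastic_if_rows_stochastic:
  assumes "is_mat m n A" and "\<And>i. i < m \<Longrightarrow> \<exists>F. stochastic m n F \<and> (\<forall>j<n. A i j = F i j)"
  shows "stochastic m n A"
  unfolding stochastic_def
proof (intro conjI allI impI)
  fix i assume "i < m"
  then obtain F where F: "stochastic m n F" "\<forall>j<n. A i j = F i j" using assms(2) by blast
  show "0 \<le> A i j" if "j < n" for j using F \<open>i < m\<close> that by (simp add: stochastic_def)
  have "(\<Sum>j<n. A i j) = (\<Sum>j<n. F i j)" using F(2) by simp
  then show "(\<Sum>j<n. A i j) = 1" using F(1) \<open>i < m\<close> by (simp add: stochastic_def)
qed (fact assms(1))

lemma stochastic_pi_mat:
  assumes "stochastic m n A"
  shows "stochastic m n (pi_mat m n A)"
  unfolding stochastic_def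
proof (intro conjI allI impI)
  fix i assume i: "i < m"
  then show "0 \<le> pi_mat m n A i j" if "j < n" for j
    using assms that by (simp add: stochastic_def)
  have "(\<Sum>j<n. pi_mat m n A i j) = (\<Sum>j<n. A (m - 1 - i) (n - 1 - j))" using i by simp
  also have "\<dots> = (\<Sum>j<n. A (m - 1 - i) j)"
    using sum.nat_diff_reindex[of "A (m - 1 - i)" n] by simp
  finally show "(\<Sum>j<n. pi_mat m n A i j) = 1" using assms i by (simp add: stochastic_def)
qed (fact is_mat_pi_mat)

lemma is_mat_centro_mean: "is_mat m n R \<Longrightarrow> is_mat m n (centro_mean m n R)"
  by (simp add: is_mat_def centro_mean_def pi_mat_def)

lemma centro_mean_in_Gamma_pi:
  assumes "stochastic m n R"
  shows "centro_mean m n R \<in> Gamma_pi m n"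
proof -
  have R: "is_mat m n R" using assms by (simp add: stochastic_def)
  have "stochastic m n (centro_mean m n R)"
    unfolding stochastic_def
  proof (intro conjI allI impI)
    fix i assume i: "i < m"
    then show "0 \<le> centro_mean m n R i j" if "j < n" for j
      using assms stochastic_pi_mat[OF assms] that by (simp add: stochastic_def centro_mean_def)
    have "(\<Sum>j<n. centro_mean m n R i j) = (1/2) * ((\<Sum>j<n. R i j) + (\<Sum>j<n. pi_mat m n R i j))"
      by (simp only: centro_mean_def sum.distrib flip: sum_distrib_left)
    then show "(\<Sum>j<n. centro_mean m n R i j) = 1"
      using assms stochastic_pi_mat[OF assms] i by (simp add: stochastic_def)
  qed (rule is_mat_centro_mean[OF R])
  then show ?thesis by (simp add: Gamma_pi_iff centro_mean_def)
qed

lemma Gamma_pi_nonneg: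
  assumes "A \<in> Gamma_pi m n"
  shows "0 \<le> A i j"
proof -
  have "stochastic m n A" using assms unfolding Gamma_pi_iff by blast
  then show ?thesis by (cases "i < m \<and> j < n") (auto simp: stochastic_def is_mat_def)
qed

lemma rect_perm_iff_columns:
  "rect_perm m n R \<longleftrightarrow>
     is_mat m n R \<and> (\<exists>\<sigma>. \<forall>i<m. \<sigma> i < n \<and> (\<forall>j<n. R i j = of_bool (j = \<sigma> i)))"
proof
  assume R: "rect_perm m n R"
  have "\<exists>a. a < n \<and> (\<forall>j<n. R i j = of_bool (j = a))" if "i < m" for i
  proof -
    obtain a where a: "a < n" "R i a = 1" "\<And>j. j < n \<Longrightarrow> R i j = 1 \<Longrightarrow> j = a"
      using R \<open>i < m\<close> unfolding rect_perm_def by blast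
    have "R i j = of_bool (j = a)" if "j < n" for j
    proof -
      have "R i j = 0 \<or> R i j = 1" using R \<open>i < m\<close> that unfolding rect_perm_def by blast
      then show ?thesis using a(2) a(3)[OF that] by (metis of_bool_eq(1,2))
    qed
    then show ?thesis using a(1) by blast
  qed
  then have "\<exists>\<sigma>. \<forall>i<m. \<sigma> i < n \<and> (\<forall>j<n. R i j = of_bool (j = \<sigma> i))"
    by (subst choice_iff'[symmetric]) blast
  then show "is_mat m n R \<and> (\<exists>\<sigma>. \<forall>i<m. \<sigma> i < n \<and> (\<forall>j<n. R i j = of_bool (j = \<sigma> i)))"
    using R unfolding rect_perm_def by blast
next
  assume "is_mat m n R \<and> (\<exists>\<sigma>. \<forall>i<m. \<sigma> i < n \<and> (\<forall>j<n. R i j = of_bool (j = \<sigma> i)))"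
  then obtain \<sigma> where "is_mat m n R" "\<forall>i<m. \<sigma> i < n \<and> (\<forall>j<n. R i j = of_bool (j = \<sigma> i))"
    by blast
  then have cols: "is_mat m n R" "\<And>i j. i < m \<Longrightarrow> j < n \<Longrightarrow> R i j = of_bool (j = \<sigma> i)"
    and col_bound: "\<And>i. i < m \<Longrightarrow> \<sigma> i < n" by auto
  show "rect_perm m n R"
    unfolding rect_perm_def
  proof (intro conjI allI impI)
    fix i assume "i < m"
    show "R i j = 0 \<or> R i j = 1" if "j < n" for j using cols(2)[OF \<open>i < m\<close> that] by simp
    show "\<exists>!j. j < n \<and> R i j = 1"
      by (rule ex1I[of _ "\<sigma> i"]) (use cols col_bound \<open>i < m\<close> in auto)
  qed (fact cols(1))
qed

lemma stochastic_if_rect_perm: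
  assumes "rect_perm m n R"
  shows "stochastic m n R"
proof -
  obtain \<sigma> where "is_mat m n R" "\<forall>i<m. \<sigma> i < n \<and> (\<forall>j<n. R i j = of_bool (j = \<sigma> i))"
    using assms unfolding rect_perm_iff_columns by blast
  then show ?thesis by (simp add: stochastic_def)
qed

lemma extreme_mat_if_support_determines:
  assumes "X \<in> S" and nonneg: "\<And>A i j. A \<in> S \<Longrightarrow> 0 \<le> A i j"
    and unique: "\<And>A. A \<in> S \<Longrightarrow> (\<And>i j. X i j = 0 \<Longrightarrow> A i j = 0) \<Longrightarrow> A = X"
  shows "extreme_mat X S"
  unfolding extreme_mat_def
proof (intro conjI ballI allI impI)
  fix A B t assume A: "A \<in> S" and B: "B \<in> S"
    and X: "0 < t \<and> t < 1 \<and> X = (\<lambda>i j. t * A i j + (1 - t) * B i j)"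
  have "A i j = 0 \<and> B i j = 0" if "X i j = 0" for i j
  proof -
    have "t * A i j + (1 - t) * B i j = 0" using X that by metis
    moreover have "0 \<le> t * A i j" "0 \<le> (1 - t) * B i j"
      using nonneg[OF A, of i j] nonneg[OF B, of i j] X by simp_all
    ultimately show ?thesis using X by (simp add: add_nonneg_eq_0_iff)
  qed
  then show "A = B" using unique A B by metis
qed (fact assms(1))

lemma eq_half_indicators_if_supported_on_pair:
  fixes f :: "nat \<Rightarrow> real"
  assumes "a < n" "b < n" and sum: "(\<Sum>j<n. f j) = 1"
    and support: "\<And>j. j < n \<Longrightarrow> j \<noteq> a \<Longrightarrow> j \<noteq> b \<Longrightarrow> f j = 0" and "f a = f b" and "j < n"
  shows "f j = (of_bool (j = a) + of_bool (j = b)) / 2"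
proof -
  have "(\<Sum>j\<in>{a, b}. f j) = 1"
    using sum sum.mono_neutral_right[of "{..<n}" "{a, b}" f] support assms(1,2) by fastforce
  then show ?thesis using support[OF \<open>j < n\<close>] \<open>f a = f b\<close>
    by (cases "a = b") auto
qed

lemma centro_mean_columns:
  assumes cols: "\<forall>i<m. \<sigma> i < n \<and> (\<forall>j<n. R i j = of_bool (j = \<sigma> i))"
    and "i < m" "j < n"
  shows "centro_mean m n R i j = (of_bool (j = \<sigma> i) + of_bool (j = n - 1 - \<sigma> (m - 1 - i))) / 2"
proof -
  have "m - 1 - i < m" "n - 1 - j < n" using assms(2,3) by auto
  then have "R (m - 1 - i) (n - 1 - j) = of_bool (j = n - 1 - \<sigma> (m - 1 - i))"
    using cols \<open>j < n\<close> by force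
  then show ?thesis using cols assms(2,3) by (simp add: centro_mean_def)
qed

lemma columns_reflect_if_centrosymmetric_off_centre:
  assumes cols: "\<forall>i<m. \<sigma> i < n \<and> (\<forall>j<n. R i j = of_bool (j = \<sigma> i))"
    and sym: "centrosymmetric_off_centre m n R" and "i < m" "i \<noteq> m - 1 - i"
  shows "\<sigma> i = n - 1 - \<sigma> (m - 1 - i)"
proof -
  have "m - 1 - i < m" "\<sigma> i < n" "n - 1 - \<sigma> i < n" using cols \<open>i < m\<close> by auto
  have "1 = R i (\<sigma> i)" using cols \<open>i < m\<close> by simp
  also have "\<dots> = R (m - 1 - i) (n - 1 - \<sigma> i)"
    using sym \<open>i < m\<close> \<open>\<sigma> i < n\<close> \<open>i \<noteq> m - 1 - i\<close> unfolding centrosymmetric_off_centre_def by blast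
  also have "\<dots> = of_bool (n - 1 - \<sigma> i = \<sigma> (m - 1 - i))"
    using cols \<open>m - 1 - i < m\<close> \<open>n - 1 - \<sigma> i < n\<close> by blast
  finally have "n - 1 - \<sigma> i = \<sigma> (m - 1 - i)" by simp
  then show ?thesis using \<open>\<sigma> i < n\<close> by linarith
qed

lemma Gamma_pi_entry_eq_centro_mean_if_support_within:
  assumes cols: "\<forall>i<m. \<sigma> i < n \<and> (\<forall>j<n. R i j = of_bool (j = \<sigma> i))"
    and sym: "centrosymmetric_off_centre m n R" and A: "A \<in> Gamma_pi m n"
    and support: "\<And>j. j < n \<Longrightarrow> centro_mean m n R i j = 0 \<Longrightarrow> A i j = 0"
    and "i < m" "j < n"
  shows "A i j = centro_mean m n R i j"
proof -
  have A_rows: "(\<Sum>j<n. A i j) = 1" and A_sym: "\<forall>i<m. \<forall>j<n. A i j = A (m - 1 - i) (n - 1 - j)"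
    using A \<open>i < m\<close> unfolding Gamma_pi_iff stochastic_def by blast+
  define a where "a = \<sigma> i"
  define b where "b = n - 1 - \<sigma> (m - 1 - i)"
  have "a < n" "b < n" using cols \<open>i < m\<close> by (auto simp: a_def b_def)
  have X_row: "centro_mean m n R i j' = (of_bool (j' = a) + of_bool (j' = b)) / 2" if "j' < n" for j'
    using centro_mean_columns[OF cols \<open>i < m\<close> that] by (simp add: a_def b_def)
  have zero: "A i j' = 0" if "j' < n" "j' \<noteq> a" "j' \<noteq> b" for j'
    using support X_row that by simp
  have "A i a = A i b"
  proof (cases "i = m - 1 - i")
    case True
    then have "b = n - 1 - a" unfolding a_def b_def by metis
    then show ?thesis using A_sym[rule_format, OF \<open>i < m\<close> \<open>a < n\<close>] True by metis
  next
    case False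
    then have "a = b"
      using columns_reflect_if_centrosymmetric_off_centre[OF cols sym \<open>i < m\<close>]
      by (simp add: a_def b_def)
    then show ?thesis by simp
  qed
  then have "A i j = (of_bool (j = a) + of_bool (j = b)) / 2"
    using eq_half_indicators_if_supported_on_pair[OF \<open>a < n\<close> \<open>b < n\<close> A_rows zero]
      \<open>j < n\<close> by blast
  then show ?thesis using X_row[OF \<open>j < n\<close>] by simp
qed

theorem extreme_centro_mean_if_centrosymmetric_off_centre:
  assumes "rect_perm m n R" and sym: "centrosymmetric_off_centre m n R"
  shows "extreme_mat (centro_mean m n R) (Gamma_pi m n)"
proof (rule extreme_mat_if_support_determines)
  obtain \<sigma> where cols: "\<forall>i<m. \<sigma> i < n \<and> (\<forall>j<n. R i j = of_bool (j = \<sigma> i))"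
    using assms(1) unfolding rect_perm_iff_columns by blast
  show X: "centro_mean m n R \<in> Gamma_pi m n"
    by (rule centro_mean_in_Gamma_pi[OF stochastic_if_rect_perm[OF assms(1)]])
  show "\<And>A i j. A \<in> Gamma_pi m n \<Longrightarrow> 0 \<le> A i j" by (rule Gamma_pi_nonneg)
  fix A assume A: "A \<in> Gamma_pi m n"
    and support: "\<And>i j. centro_mean m n R i j = 0 \<Longrightarrow> A i j = 0"
  have "is_mat m n A" "is_mat m n (centro_mean m n R)"
    using A X unfolding Gamma_pi_iff stochastic_def by blast+
  moreover have "A i j = centro_mean m n R i j" if "i < m" "j < n" for i j
    using Gamma_pi_entry_eq_centro_mean_if_support_within[OF cols sym A support that] .
  ultimately show "A = centro_mean m n R"
    unfolding is_mat_def by (metis ext)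
qed

definition split_row_pair :: "nat \<Rightarrow> nat \<Rightarrow> (nat \<Rightarrow> nat \<Rightarrow> real) \<Rightarrow> nat \<Rightarrow> nat \<Rightarrow> nat \<Rightarrow> real" where
  "split_row_pair m n R i = (\<lambda>r c.
     if r = i then R r c else if r = m - 1 - i then pi_mat m n R r c else centro_mean m n R r c)"

lemma split_row_pair_in_Gamma_pi:
  assumes R: "stochastic m n R" and "i < m" "i \<noteq> m - 1 - i"
  shows "split_row_pair m n R i \<in> Gamma_pi m n"
proof -
  let ?S = "split_row_pair m n R i" and ?X = "centro_mean m n R"
  have R_mat: "is_mat m n R" using R by (simp add: stochastic_def)
  then have S_mat: "is_mat m n ?S" using \<open>i < m\<close>
    by (auto simp: is_mat_def split_row_pair_def centro_mean_def pi_mat_def)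
  have X: "stochastic m n ?X" using centro_mean_in_Gamma_pi[OF R] unfolding Gamma_pi_iff by blast
  have "stochastic m n ?S"
  proof (rule stochastic_if_rows_stochastic[OF S_mat])
    fix r assume "r < m"
    show "\<exists>F. stochastic m n F \<and> (\<forall>c<n. ?S r c = F r c)"
      using R stochastic_pi_mat[OF R] X by (auto simp: split_row_pair_def)
  qed
  moreover have "?S r c = ?S (m - 1 - r) (n - 1 - c)" if "r < m" "c < n" for r c
  proof -
    have "?X r c = ?X (m - 1 - r) (n - 1 - c)" using that by (simp add: centro_mean_def)
    then show ?thesis using that \<open>i < m\<close> \<open>i \<noteq> m - 1 - i\<close> by (auto simp: split_row_pair_def)
  qed
  ultimately show ?thesis unfolding Gamma_pi_iff by blast
qed

lemma centro_mean_midpoint_split_row_pair: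
  assumes "i < m" "i \<noteq> m - 1 - i"
  shows "centro_mean m n R =
    (\<lambda>r c. (1/2) * split_row_pair m n R i r c + (1 - 1/2) * split_row_pair m n R (m - 1 - i) r c)"
  using assms by (auto simp: fun_eq_iff split_row_pair_def centro_mean_def)

theorem centrosymmetric_off_centre_if_extreme_centro_mean:
  assumes R: "stochastic m n R" and extreme: "extreme_mat (centro_mean m n R) (Gamma_pi m n)"
  shows "centrosymmetric_off_centre m n R"
  unfolding centrosymmetric_off_centre_def
proof (intro allI impI)
  fix i j assume "i < m" "j < n" "i \<noteq> m - 1 - i"
  then have "m - 1 - i < m" "m - 1 - i \<noteq> m - 1 - (m - 1 - i)" by auto
  then have "split_row_pair m n R (m - 1 - i) \<in> Gamma_pi m n"
    using split_row_pair_in_Gamma_pi[OF R] by blast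
  moreover have "split_row_pair m n R i \<in> Gamma_pi m n"
    using split_row_pair_in_Gamma_pi[OF R] \<open>i < m\<close> \<open>i \<noteq> m - 1 - i\<close> by blast
  moreover have "0 < (1/2::real) \<and> (1/2::real) < 1" by simp
  ultimately have "split_row_pair m n R i = split_row_pair m n R (m - 1 - i)"
    using extreme centro_mean_midpoint_split_row_pair[OF \<open>i < m\<close> \<open>i \<noteq> m - 1 - i\<close>]
    unfolding extreme_mat_def by blast
  then have "split_row_pair m n R i i j = split_row_pair m n R (m - 1 - i) i j" by simp
  then show "R i j = R (m - 1 - i) (n - 1 - j)"
    using \<open>i < m\<close> \<open>j < n\<close> \<open>i \<noteq> m - 1 - i\<close> by (auto simp: split_row_pair_def)
qed

lemma centrosymmetric_off_centre_iff_even: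
  assumes "is_mat m n R" "even m"
  shows "centrosymmetric_off_centre m n R \<longleftrightarrow> centrosymmetric m n R"
proof -
  have "i \<noteq> m - 1 - i" if "i < m" for i using assms(2) that by presburger
  then show ?thesis
    unfolding centrosymmetric_iff[OF assms(1)] centrosymmetric_off_centre_def by blast
qed

definition skip_centre :: "nat \<Rightarrow> nat \<Rightarrow> nat" where
  "skip_centre m i = (if i < m div 2 then i else Suc i)"

lemma del_center_row_apply:
  "i < m - 1 \<Longrightarrow> j < n \<Longrightarrow> del_center_row m n R i j = R (skip_centre m i) j"
  by (simp add: del_center_row_def skip_centre_def)

lemma skip_centre_image:
  assumes "odd m"
  shows "skip_centre m ` {..<m - 1} = {r. r < m \<and> r \<noteq> m - 1 - r}"
proof (intro set_eqI iffI)
  fix r assume "r \<in> {r. r < m \<and> r \<noteq> m - 1 - r}"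
  then have "(if r < m div 2 then r else r - 1) \<in> {..<m - 1} \<and>
      r = skip_centre m (if r < m div 2 then r else r - 1)"
    using assms by (auto simp: skip_centre_def) presburger+
  then show "r \<in> skip_centre m ` {..<m - 1}" by blast
qed (use assms in \<open>auto simp: skip_centre_def split: if_splits\<close>)

lemma skip_centre_reflect:
  "odd m \<Longrightarrow> i < m - 1 \<Longrightarrow> skip_centre m (m - 1 - 1 - i) = m - 1 - skip_centre m i"
  by (auto simp: skip_centre_def) presburger+

lemma centrosymmetric_off_centre_iff_odd:
  assumes "odd m"
  shows "centrosymmetric_off_centre m n R \<longleftrightarrow> centrosymmetric (m - 1) n (del_center_row m n R)"
proof -
  have "is_mat (m - 1) n (del_center_row m n R)" by (simp add: is_mat_def del_center_row_def)
  then have "centrosymmetric (m - 1) n (del_center_row m n R) \<longleftrightarrow>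
      (\<forall>i<m - 1. \<forall>j<n. del_center_row m n R i j = del_center_row m n R (m - 1 - 1 - i) (n - 1 - j))"
    by (rule centrosymmetric_iff)
  also have "\<dots> \<longleftrightarrow>
      (\<forall>i\<in>{..<m - 1}. \<forall>j<n. R (skip_centre m i) j = R (m - 1 - skip_centre m i) (n - 1 - j))"
  proof -
    have "del_center_row m n R i j = R (skip_centre m i) j"
      "del_center_row m n R (m - 1 - 1 - i) (n - 1 - j) = R (m - 1 - skip_centre m i) (n - 1 - j)"
      if "i < m - 1" "j < n" for i j
      using that del_center_row_apply[of "m - 1 - 1 - i" m "n - 1 - j" n R]
        skip_centre_reflect[OF assms that(1)] by (auto simp: del_center_row_apply)
    then show ?thesis by (metis lessThan_iff)
  qed
  also have "\<dots> \<longleftrightarrow> (\<forall>r\<in>skip_centre m ` {..<m - 1}. \<forall>j<n. R r j = R (m - 1 - r) (n - 1 - j))"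
    by simp
  finally show ?thesis
    unfolding skip_centre_image[OF assms] centrosymmetric_off_centre_def by blast
qed

lemma rect_perm_del_center_row:
  assumes "odd m" "rect_perm m n R"
  shows "rect_perm (m - 1) n (del_center_row m n R)"
proof -
  obtain \<sigma> where cols: "\<forall>i<m. \<sigma> i < n \<and> (\<forall>j<n. R i j = of_bool (j = \<sigma> i))"
    using assms(2) unfolding rect_perm_iff_columns by blast
  have "skip_centre m i < m" if "i < m - 1" for i
    using skip_centre_image[OF assms(1)] that by blast
  then have "\<forall>i<m - 1. (\<sigma> \<circ> skip_centre m) i < n \<and>
      (\<forall>j<n. del_center_row m n R i j = of_bool (j = (\<sigma> \<circ> skip_centre m) i))"
    using cols by (simp add: del_center_row_apply)
  then show ?thesis
    unfolding rect_perm_iff_columns by (auto simp: is_mat_def del_center_row_def)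
qed

theorem extreme_centro_mean_iff:
  assumes "rect_perm m n R"
  shows "extreme_mat (centro_mean m n R) (Gamma_pi m n) \<longleftrightarrow> centrosymmetric_off_centre m n R"
  using assms centrosymmetric_off_centre_if_extreme_centro_mean stochastic_if_rect_perm
    extreme_centro_mean_if_centrosymmetric_off_centre by blast

theorem mainTheorem4:
  fixes m n :: nat and R :: "nat \<Rightarrow> nat \<Rightarrow> real"
  assumes "0 < m" and "0 < n"
    and "rect_perm m n R"
  shows "extreme_mat (\<lambda>i j. (1/2) * (R i j + pi_mat m n R i j)) (Gamma_pi m n) \<longleftrightarrow>
    ((even m \<and> rect_perm m n R \<and> centrosymmetric m n R) \<or>
     (odd m \<and> rect_perm (m - 1) n (del_center_row m n R) \<and>
        centrosymmetric (m - 1) n (del_center_row m n R)))"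
proof -
  have "extreme_mat (\<lambda>i j. (1/2) * (R i j + pi_mat m n R i j)) (Gamma_pi m n) \<longleftrightarrow>
      centrosymmetric_off_centre m n R"
    using extreme_centro_mean_iff[OF assms(3)] by (simp add: centro_mean_def)
  moreover have "is_mat m n R" using assms(3) by (simp add: rect_perm_def)
  ultimately show ?thesis
    using assms(3) rect_perm_del_center_row centrosymmetric_off_centre_iff_even
      centrosymmetric_off_centre_iff_odd by blast
qed

end
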